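(* Let $\varphi>0$, $w^{\max}>0$, $O^{\max}>0$, $S^{\max}>0$, $p_B^{\max}>0$, $\Delta p_B\ge 0$, $J^{\max}>0$ with $J^{\max}\ge p_B^{\max}+\Delta p_B$ and $O^{\max}\ge p_B^{\max}+\Delta p_B$. Set $\theta=\varphi V+O^{\max}$ with $$0<V\le\frac{S^{\max}-w^{\max}-O^{\max}}{\varphi}.$$ Consider the battery dynamics $S(t+1)=S(t)-O(t)+\delta(t)w(t)$, $t=0,1,2,\dots$, with $S(0)\in[0,S^{\max}]$, harvested energy $w(t)\in[0,w^{\max}]$, and let $p_B^*(t)\in[0,p_B^{\max}]$ be the base-station transmit power at slot $t$. Suppose at each slot the quantities $J(t)$ (grid energy), $O(t)$ (energy withdrawn from the battery) and $\delta(t)\in[0,1]$ are chosen by the rule: 1) if $S(t)\ge\theta-\varphi V$, then $J(t)=0$, $O(t)=\min\{p_B^*(t)+\Delta p_B,O^{\max}\}$, and $\delta(t)=1$ if $0\le S(t)<\theta$, $\delta(t)=0$ otherwise; 2) if $S(t)<\theta-\varphi V$, then $J(t)=\min\{p_B^*(t)+\Delta p_B,J^{\max}\}$, $O(t)=\max\{0,p_B^*(t)+\Delta p_B-J(t)\}$, $\delta(t)=1$. Then $S(t)\in[0,S^{\max}]$ for all $t$.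
   Context: Setting: a base station powered by the grid and by a renewable source with a storage battery of capacity $S^{\max}$; $S(t)$ is the battery energy level, $w(t)$ the harvested renewable energy in slot $t$ (of which the fraction $\delta(t)$ is stored), $O(t)$ the energy drawn from the battery (maximum discharge rate $O^{\max}$), $J(t)$ the energy drawn from the grid for the BS, $\Delta p_B$ the static power consumption of the BS and $p_B^*(t)$ the BS transmit power chosen at slot $t$ by the resource allocation step (which satisfies the total power constraint $p_B^*(t)\le p_B^{\max}$). *)

theory Defs
  imports Main Complex_Main
begin

end

theory Submission
  imports Defs
begin

text \<open>The threshold \<open>\<theta> - \<phi> V\<close> equals \<open>O\<^sup>m\<^sup>a\<^sup>x\<close>. Above it the battery releases at most \<open>O\<^sup>m\<^sup>a\<^sup>x\<close>,
  so it cannot run empty, and it is recharged only below \<open>\<theta>\<close>, where the choice of \<open>V\<close> leaves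
  room for a full harvest \<open>w\<^sup>m\<^sup>a\<^sup>x\<close>. Below it the grid covers the whole demand, so the battery
  only charges, reaching at most \<open>O\<^sup>m\<^sup>a\<^sup>x + w\<^sup>m\<^sup>a\<^sup>x \<le> \<theta> + w\<^sup>m\<^sup>a\<^sup>x \<le> S\<^sup>m\<^sup>a\<^sup>x\<close>.\<close>

lemma discharge_slot_in_range:
  fixes S Smax Omax \<theta> p w wmax :: real
  assumes "0 \<le> Omax" "Omax \<le> S" "S \<le> Smax" "0 \<le> p"
    and "0 \<le> w" "w \<le> wmax" "\<theta> + wmax \<le> Smax"
  shows "0 \<le> S - min p Omax + (if 0 \<le> S \<and> S < \<theta> then 1 else 0) * w
         \<and> S - min p Omax + (if 0 \<le> S \<and> S < \<theta> then 1 else 0) * w \<le> Smax"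
proof -
  have "0 \<le> min p Omax" "min p Omax \<le> Omax"
    using assms(1-4) by auto
  then show ?thesis
    using assms by auto
qed

lemma charge_slot_in_range:
  fixes S Smax Omax Jmax p w wmax :: real
  assumes "0 \<le> S" "S < Omax" "p \<le> Jmax"
    and "0 \<le> w" "w \<le> wmax" "Omax + wmax \<le> Smax"
  shows "0 \<le> S - max 0 (p - min p Jmax) + 1 * w
         \<and> S - max 0 (p - min p Jmax) + 1 * w \<le> Smax"
proof -
  have "max 0 (p - min p Jmax) = 0"
    using assms(3) by simp
  then show ?thesis
    using assms by simp
qed

theorem theorem2:
  fixes \<phi> wmax Omax Smax pBmax \<Delta>pB Jmax V \<theta> :: real
    and S w pB J Ob \<delta> :: "nat \<Rightarrow> real"
  assumes "\<phi> > 0" and "wmax > 0" and "Omax > 0" and "Smax > 0" and "pBmax > 0"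
    and "\<Delta>pB \<ge> 0" and "Jmax > 0"
    and "Jmax \<ge> pBmax + \<Delta>pB" and "Omax \<ge> pBmax + \<Delta>pB"
    and "\<theta> = \<phi> * V + Omax"
    and "0 < V" and "V \<le> (Smax - wmax - Omax) / \<phi>"
    and "\<And>t. S (Suc t) = S t - Ob t + \<delta> t * w t"
    and "0 \<le> S 0" and "S 0 \<le> Smax"
    and "\<And>t. 0 \<le> w t \<and> w t \<le> wmax"
    and "\<And>t. 0 \<le> pB t \<and> pB t \<le> pBmax"
    and rule1: "\<And>t. S t \<ge> \<theta> - \<phi> * V \<Longrightarrow>
                 J t = 0 \<and> Ob t = min (pB t + \<Delta>pB) Omax \<and>
                 \<delta> t = (if 0 \<le> S t \<and> S t < \<theta> then 1 else 0)"
    and rule2: "\<And>t. S t < \<theta> - \<phi> * V \<Longrightarrow>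
                 J t = min (pB t + \<Delta>pB) Jmax \<and> Ob t = max 0 (pB t + \<Delta>pB - J t) \<and>
                 \<delta> t = 1"
  shows "\<forall>t. 0 \<le> S t \<and> S t \<le> Smax"
proof
  fix t
  have threshold: "\<theta> - \<phi> * V = Omax"
    using assms(10) by simp
  have "\<phi> * V \<le> Smax - wmax - Omax" "0 < \<phi> * V"
    using assms(1,11,12) by (simp_all add: pos_le_divide_eq mult.commute)
  then have room: "\<theta> + wmax \<le> Smax" "Omax + wmax \<le> Smax"
    using assms(10) by simp_all
  show "0 \<le> S t \<and> S t \<le> Smax"
  proof (induction t)
    case 0
    then show ?case using assms(14,15) by simp
  next
    case (Suc t)
    have w: "0 \<le> w t" "w t \<le> wmax" and demand: "0 \<le> pB t + \<Delta>pB" "pB t + \<Delta>pB \<le> Jmax"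
      using assms(6,8) assms(16,17)[of t] by auto
    show ?case
    proof (cases "Omax \<le> S t")
      case True
      then show ?thesis
        using rule1[of t] discharge_slot_in_range[OF _ True _ demand(1) w room(1)] Suc.IH threshold assms(3,13)
        by simp
    next
      case False
      then show ?thesis
        using rule2[of t] charge_slot_in_range[OF _ _ demand(2) w room(2)] Suc.IH threshold assms(13)
        by simp
    qed
  qed
qed

end
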